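(* For all $\alpha,\beta\in[0,\frac12)$, the function $c_{\alpha,\beta}$ defined below is a.e. non-negative and has uniform marginals, i.e. $\int_0^1c_{\alpha,\beta}(u,v)\,dv=1$ for a.e. $u\in[0,1]$ and $\int_0^1c_{\alpha,\beta}(u,v)\,du=1$ for a.e. $v\in[0,1]$; hence it is the density of a bivariate copula $C_{\alpha,\beta}$.
   Context: Fix $\alpha,\beta\in[0,\frac12)$. Define $\varphi:[0,1]\to[0,1-\beta]$ by $\varphi(s)=0$ for $0\le s\le\alpha$, $\varphi(s)=\frac{1-\beta}{1-2\alpha}(s-\alpha)$ for $\alpha<s<1-\alpha$, and $\varphi(s)=1-\beta$ for $1-\alpha\le s\le1$. Let $H_{\alpha,\beta}=\{(s,t)\in[0,1]^2:\varphi(s)\le t\le\varphi(s)+\beta\}$, $L(t)=\int_0^1\mathbf{1}_{\{\varphi(s)\le t\le\varphi(s)+\beta\}}\,ds$, $f_T(t)=\frac{1-L(t)}{1-\beta}$ (a probability density on $[0,1]$), $F_T(v)=\int_0^vf_T(x)\,dx$ with quantile function $F_T^{-1}$, and \[ c_{\alpha,\beta}(u,v)=\frac{1}{(1-\beta)f_T(F_T^{-1}(v))}\,\mathbf{1}_{\{(u,F_T^{-1}(v))\notin H_{\alpha,\beta}\}},\qquad (u,v)\in[0,1]^2. \] *)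

theory Defs
  imports "HOL-Analysis.Analysis"
begin

definition phi :: "real \<Rightarrow> real \<Rightarrow> real \<Rightarrow> real" where
  "phi \<alpha> \<beta> s =
     (if s \<le> \<alpha> then 0
      else if s < 1 - \<alpha> then (1 - \<beta>) / (1 - 2 * \<alpha>) * (s - \<alpha>)
      else 1 - \<beta>)"

definition H :: "real \<Rightarrow> real \<Rightarrow> (real \<times> real) set" where
  "H \<alpha> \<beta> = {(s, t). s \<in> {0..1} \<and> t \<in> {0..1} \<and> phi \<alpha> \<beta> s \<le> t \<and> t \<le> phi \<alpha> \<beta> s + \<beta>}"

definition L :: "real \<Rightarrow> real \<Rightarrow> real \<Rightarrow> real" where
  "L \<alpha> \<beta> t = (LBINT s=0..1. indicator {s. phi \<alpha> \<beta> s \<le> t \<and> t \<le> phi \<alpha> \<beta> s + \<beta>} s)"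

definition fT :: "real \<Rightarrow> real \<Rightarrow> real \<Rightarrow> real" where
  "fT \<alpha> \<beta> t = (1 - L \<alpha> \<beta> t) / (1 - \<beta>)"

definition FT :: "real \<Rightarrow> real \<Rightarrow> real \<Rightarrow> real" where
  "FT \<alpha> \<beta> v = (LBINT x=0..v. fT \<alpha> \<beta> x)"

definition FT_inv :: "real \<Rightarrow> real \<Rightarrow> real \<Rightarrow> real" where
  "FT_inv \<alpha> \<beta> v = Inf {x \<in> {0..1}. v \<le> FT \<alpha> \<beta> x}"

definition cdens :: "real \<Rightarrow> real \<Rightarrow> real \<Rightarrow> real \<Rightarrow> real" where
  "cdens \<alpha> \<beta> u v =
     (if (u, FT_inv \<alpha> \<beta> v) \<notin> H \<alpha> \<beta>
      then 1 / ((1 - \<beta>) * fT \<alpha> \<beta> (FT_inv \<alpha> \<beta> v)) else 0)"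

definition is_copula :: "(real \<Rightarrow> real \<Rightarrow> real) \<Rightarrow> bool" where
  "is_copula C \<longleftrightarrow>
     (\<forall>u\<in>{0..1}. C u 0 = 0 \<and> C 0 u = 0 \<and> C u 1 = u \<and> C 1 u = u) \<and>
     (\<forall>u1\<in>{0..1}. \<forall>u2\<in>{0..1}. \<forall>v1\<in>{0..1}. \<forall>v2\<in>{0..1}.
        u1 \<le> u2 \<longrightarrow> v1 \<le> v2 \<longrightarrow> 0 \<le> C u2 v2 - C u2 v1 - C u1 v2 + C u1 v1)"

end

theory Submission
  imports Defs
begin

(* With t = FT_inv v we have (1 - \<beta>) fT t = 1 - L t, where L t is the length of the horizontal
   section of H at height t; so c(., v) equals 1 / (1 - L t) off that section and its integral
   over [0,1] is 1. For fixed u, the substitution t = FT_inv v (whose derivative is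
   1 / fT (FT_inv v) off finitely many points) turns the v-integral into the length of the
   complement in [0,1] of the vertical section of H at u, divided by 1 - \<beta>; that section has
   length \<beta>, which gives 1. L is piecewise linear and bounded by a constant below 1, so fT is
   bounded away from 0, FT is a strictly increasing bijection of [0,1] and c is bounded; the
   copula axioms then follow from the marginals by Fubini. *)

lemma has_integral_affine:
  fixes p q c d :: real
  assumes "c \<le> d"
  shows "((\<lambda>t. p + q * t) has_integral (p * (d - c) + q * (d\<^sup>2 - c\<^sup>2) / 2)) {c..d}"
proof -
  have "((\<lambda>t. p + q * t) has_integral ((p * d + q * d\<^sup>2 / 2) - (p * c + q * c\<^sup>2 / 2))) {c..d}"
    by (rule fundamental_theorem_of_calculus[OF assms])
       (auto intro!: derivative_eq_intros simp: has_real_derivative_iff_has_vector_derivative[symmetric])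
  then show ?thesis
    by (simp add: algebra_simps diff_divide_distrib)
qed

lemma set_borel_integral_if_has_integral_nonneg:
  fixes f :: "real \<Rightarrow> real"
  assumes f: "(f has_integral I) S" and nonneg: "\<And>x. x \<in> S \<Longrightarrow> 0 \<le> f x"
    and meas: "(\<lambda>x. indicator S x * f x) \<in> borel_measurable borel"
  shows "set_integrable lborel S f" "(LINT x:S|lborel. f x) = I"
proof -
  have "set_integrable lebesgue S f"
    using nonnegative_absolutely_integrable_1[OF has_integral_integrable[OF f] nonneg] .
  with meas show int: "set_integrable lborel S f"
    unfolding set_integrable_def by (simp add: integrable_completion)
  show "(LINT x:S|lborel. f x) = I"
    using set_borel_integral_eq_integral(2)[OF int] f by (simp add: integral_unique)
qed

lemma Inf_superlevel_set_strict_mono_on: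
  fixes F :: "real \<Rightarrow> real"
  assumes "strict_mono_on {a..b} F" "x \<in> {a..b}"
  shows "Inf {y \<in> {a..b}. F x \<le> F y} = x"
proof -
  have "{y \<in> {a..b}. F x \<le> F y} = {x..b}"
    using assms strict_mono_on_less_eq[OF assms(1)] by auto
  then show ?thesis
    using assms(2) by simp
qed

lemma set_integral_singleton:
  fixes f :: "real \<Rightarrow> real"
  shows "(LINT x:{c}|lborel. f x) = 0"
proof -
  have "(\<lambda>x. indicator {c} x *\<^sub>R f x) = (\<lambda>x. f c * indicator {c} x)"
    by (auto simp: fun_eq_iff indicator_def)
  then show ?thesis
    unfolding set_lebesgue_integral_def by simp
qed

lemma set_integral_Times_fst:
  fixes f :: "real \<Rightarrow> real \<Rightarrow> real"
  assumes "set_integrable lborel (A \<times> B) (\<lambda>p. f (fst p) (snd p))"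
  shows "set_integrable lborel A (\<lambda>x. LINT y:B|lborel. f x y)"
    and "(LINT p:A \<times> B|lborel. f (fst p) (snd p)) = (LINT x:A|lborel. LINT y:B|lborel. f x y)"
proof -
  define F where "F x y = indicator A x *\<^sub>R (indicator B y *\<^sub>R f x y)" for x y
  have split: "(\<lambda>p. indicator (A \<times> B) p *\<^sub>R f (fst p) (snd p)) = case_prod F"
    by (auto simp: F_def fun_eq_iff indicator_times)
  have F: "integrable (lborel \<Otimes>\<^sub>M lborel) (case_prod F)"
    using assms unfolding set_integrable_def split lborel_prod .
  have inner: "(\<integral>y. F x y \<partial>lborel) = indicator A x *\<^sub>R (LINT y:B|lborel. f x y)" for x
    by (simp add: F_def set_lebesgue_integral_def)
  show "set_integrable lborel A (\<lambda>x. LINT y:B|lborel. f x y)"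
    using lborel_pair.integrable_fst[OF F] unfolding set_integrable_def inner .
  show "(LINT p:A \<times> B|lborel. f (fst p) (snd p)) = (LINT x:A|lborel. LINT y:B|lborel. f x y)"
    using lborel_pair.integral_fst[OF F]
    unfolding set_lebesgue_integral_def split inner lborel_prod by simp
qed

lemma set_integral_Times_snd:
  fixes f :: "real \<Rightarrow> real \<Rightarrow> real"
  assumes "set_integrable lborel (A \<times> B) (\<lambda>p. f (fst p) (snd p))"
  shows "set_integrable lborel B (\<lambda>y. LINT x:A|lborel. f x y)"
    and "(LINT p:A \<times> B|lborel. f (fst p) (snd p)) = (LINT y:B|lborel. LINT x:A|lborel. f x y)"
proof -
  define F where "F x y = indicator B y *\<^sub>R (indicator A x *\<^sub>R f x y)" for x y
  have split: "(\<lambda>p. indicator (A \<times> B) p *\<^sub>R f (fst p) (snd p)) = case_prod F"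
    by (auto simp: F_def fun_eq_iff indicator_times)
  have F: "integrable (lborel \<Otimes>\<^sub>M lborel) (case_prod F)"
    using assms unfolding set_integrable_def split lborel_prod .
  have inner: "(\<integral>x. F x y \<partial>lborel) = indicator B y *\<^sub>R (LINT x:A|lborel. f x y)" for y
    by (simp add: F_def set_lebesgue_integral_def)
  show "set_integrable lborel B (\<lambda>y. LINT x:A|lborel. f x y)"
    using lborel_pair.integrable_snd[OF F] unfolding set_integrable_def inner .
  show "(LINT p:A \<times> B|lborel. f (fst p) (snd p)) = (LINT y:B|lborel. LINT x:A|lborel. f x y)"
    using lborel_pair.integral_snd[OF F]
    unfolding set_lebesgue_integral_def split inner lborel_prod by simp
qed

lemma set_integral_AE_eq_const:
  fixes f :: "'a \<Rightarrow> real"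
  assumes "set_integrable M A f" "AE x in M. x \<in> A \<longrightarrow> f x = c"
    and "A \<in> sets M" "emeasure M A < \<infinity>"
  shows "(LINT x:A|M. f x) = measure M A * c"
proof -
  have "(LINT x:A|M. f x) = (LINT x:A|M. c)"
    unfolding set_lebesgue_integral_def
  proof (rule integral_cong_AE)
    show "(\<lambda>x. indicator A x *\<^sub>R f x) \<in> borel_measurable M"
      using assms(1) unfolding set_integrable_def by (rule borel_measurable_integrable)
    show "(\<lambda>x. indicator A x *\<^sub>R c) \<in> borel_measurable M"
      using assms(3) by measurable
    show "AE x in M. indicator A x *\<^sub>R f x = indicator A x *\<^sub>R c"
      using assms(2) by eventually_elim (simp add: indicator_def)
  qed
  then show ?thesis
    using assms(3,4) by (simp add: set_integral_const)
qed

lemma set_integral_rectangle_increment_nonneg: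
  fixes c :: "real \<Rightarrow> real \<Rightarrow> real"
  assumes int: "set_integrable lborel ({0..1} \<times> {0..1}) (\<lambda>p. c (fst p) (snd p))"
    and nonneg: "AE p in lborel. p \<in> {0..1} \<times> {0..1} \<longrightarrow> 0 \<le> c (fst p) (snd p)"
    and uv: "u1 \<le> u2" "u2 \<le> 1" "v1 \<le> v2" "v2 \<le> 1"
  shows "0 \<le> (LINT p:{0..u2} \<times> {0..v2}|lborel. c (fst p) (snd p)) - (LINT p:{0..u2} \<times> {0..v1}|lborel. c (fst p) (snd p))
    - (LINT p:{0..u1} \<times> {0..v2}|lborel. c (fst p) (snd p)) + (LINT p:{0..u1} \<times> {0..v1}|lborel. c (fst p) (snd p))"
proof -
  define g where "g u v p = indicator ({0..u} \<times> {0..v}) p * c (fst p) (snd p)" for u v p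
  have "integrable lborel (g u v)" if "u \<le> 1" "v \<le> 1" for u v
  proof -
    have "set_integrable lborel ({0..u} \<times> {0..v}) (\<lambda>p. c (fst p) (snd p))"
      using that by (intro set_integrable_subset[OF int]) (auto intro!: borel_closed closed_Times)
    then show ?thesis
      by (simp add: set_integrable_def g_def[abs_def])
  qed
  then have "(LINT p:{0..u2} \<times> {0..v2}|lborel. c (fst p) (snd p)) - (LINT p:{0..u2} \<times> {0..v1}|lborel. c (fst p) (snd p))
    - (LINT p:{0..u1} \<times> {0..v2}|lborel. c (fst p) (snd p)) + (LINT p:{0..u1} \<times> {0..v1}|lborel. c (fst p) (snd p))
      = integral\<^sup>L lborel (\<lambda>p. g u2 v2 p - g u2 v1 p - g u1 v2 p + g u1 v1 p)"
    using uv by (simp add: set_lebesgue_integral_def g_def[symmetric, abs_def])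
  also have "\<dots> \<ge> 0"
  proof (rule integral_nonneg_AE)
    show "AE p in lborel. 0 \<le> g u2 v2 p - g u2 v1 p - g u1 v2 p + g u1 v1 p"
      using nonneg
    proof eventually_elim
      fix p :: "real \<times> real"
      assume c: "p \<in> {0..1} \<times> {0..1} \<longrightarrow> 0 \<le> c (fst p) (snd p)"
      have "g u2 v2 p - g u2 v1 p - g u1 v2 p + g u1 v1 p
          = (indicator {0..u2} (fst p) - indicator {0..u1} (fst p))
            * (indicator {0..v2} (snd p) - indicator {0..v1} (snd p)) * c (fst p) (snd p)"
        by (simp add: g_def indicator_times algebra_simps)
      also have "\<dots> \<ge> 0"
        using uv c by (auto simp: indicator_def mem_Times_iff)
      finally show "0 \<le> g u2 v2 p - g u2 v1 p - g u1 v2 p + g u1 v1 p" .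
    qed
  qed
  finally show ?thesis .
qed

lemma is_copula_set_integral_density:
  fixes c :: "real \<Rightarrow> real \<Rightarrow> real"
  assumes int: "set_integrable lborel ({0..1} \<times> {0..1}) (\<lambda>p. c (fst p) (snd p))"
    and nonneg: "AE p in lborel. p \<in> {0..1} \<times> {0..1} \<longrightarrow> 0 \<le> c (fst p) (snd p)"
    and marg_fst: "AE u in lborel. u \<in> {0..1} \<longrightarrow> (LINT v:{0..1}|lborel. c u v) = 1"
    and marg_snd: "AE v in lborel. v \<in> {0..1} \<longrightarrow> (LINT u:{0..1}|lborel. c u v) = 1"
  shows "is_copula (\<lambda>u v. LINT p:{0..u} \<times> {0..v}|lborel. c (fst p) (snd p))"
proof -
  define C where "C u v = (LINT p:{0..u} \<times> {0..v}|lborel. c (fst p) (snd p))" for u v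
  have int_sub: "set_integrable lborel ({0..u} \<times> {0..v}) (\<lambda>p. c (fst p) (snd p))"
    if "u \<le> 1" "v \<le> 1" for u v
    using that by (intro set_integrable_subset[OF int]) (auto intro!: borel_closed closed_Times)
  have "C u 0 = 0" "C 0 u = 0" if "u \<in> {0..1}" for u
  proof -
    have "C u 0 = (LINT x:{0..u}|lborel. LINT y:{0..0}|lborel. c x y)"
      unfolding C_def using that by (intro set_integral_Times_fst(2) int_sub) auto
    then show "C u 0 = 0"
      by (simp only: atLeastAtMost_singleton set_integral_singleton) (simp add: set_lebesgue_integral_def)
    have "C 0 u = (LINT y:{0..u}|lborel. LINT x:{0..0}|lborel. c x y)"
      unfolding C_def using that by (intro set_integral_Times_snd(2) int_sub) auto
    then show "C 0 u = 0"
      by (simp only: atLeastAtMost_singleton set_integral_singleton) (simp add: set_lebesgue_integral_def)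
  qed
  moreover have "C u 1 = u" "C 1 u = u" if u: "u \<in> {0..1}" for u
  proof -
    have "C u 1 = (LINT x:{0..u}|lborel. LINT y:{0..1}|lborel. c x y)"
      unfolding C_def using u by (intro set_integral_Times_fst(2) int_sub) auto
    also have "\<dots> = measure lborel {0..u} * 1"
    proof (rule set_integral_AE_eq_const)
      show "set_integrable lborel {0..u} (\<lambda>x. LINT y:{0..1}|lborel. c x y)"
        using u by (intro set_integral_Times_fst(1) int_sub) auto
      show "AE x in lborel. x \<in> {0..u} \<longrightarrow> (LINT y:{0..1}|lborel. c x y) = 1"
        using marg_fst by eventually_elim (use u in auto)
    qed (auto simp: emeasure_lborel_Icc_eq)
    finally show "C u 1 = u" using u by simp
    have "C 1 u = (LINT y:{0..u}|lborel. LINT x:{0..1}|lborel. c x y)"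
      unfolding C_def using u by (intro set_integral_Times_snd(2) int_sub) auto
    also have "\<dots> = measure lborel {0..u} * 1"
    proof (rule set_integral_AE_eq_const)
      show "set_integrable lborel {0..u} (\<lambda>y. LINT x:{0..1}|lborel. c x y)"
        using u by (intro set_integral_Times_snd(1) int_sub) auto
      show "AE y in lborel. y \<in> {0..u} \<longrightarrow> (LINT x:{0..1}|lborel. c x y) = 1"
        using marg_snd by eventually_elim (use u in auto)
    qed (auto simp: emeasure_lborel_Icc_eq)
    finally show "C 1 u = u" using u by simp
  qed
  moreover have "0 \<le> C u2 v2 - C u2 v1 - C u1 v2 + C u1 v1"
    if "u1 \<in> {0..1}" "u2 \<in> {0..1}" "v1 \<in> {0..1}" "v2 \<in> {0..1}" "u1 \<le> u2" "v1 \<le> v2"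
    for u1 u2 v1 v2
    unfolding C_def using that by (intro set_integral_rectangle_increment_nonneg[OF int nonneg]) auto
  ultimately show ?thesis
    unfolding is_copula_def C_def by blast
qed

locale band_copula =
  fixes \<alpha> \<beta> :: real
  assumes \<alpha>_nonneg: "0 \<le> \<alpha>" and \<alpha>_less: "\<alpha> < 1/2"
    and \<beta>_nonneg: "0 \<le> \<beta>" and \<beta>_less: "\<beta> < 1/2"
begin

definition \<kappa> :: real where "\<kappa> = (1 - \<beta>) / (1 - 2 * \<alpha>)"

lemma \<kappa>_pos: "0 < \<kappa>"
  using \<alpha>_less \<beta>_less by (simp add: \<kappa>_def)

lemma one_minus_\<beta>_div_\<kappa>: "(1 - \<beta>) / \<kappa> = 1 - 2 * \<alpha>"
  using \<alpha>_less \<beta>_less by (simp add: \<kappa>_def)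

lemma phi_eq: "phi \<alpha> \<beta> s = (if s \<le> \<alpha> then 0 else if s < 1 - \<alpha> then \<kappa> * (s - \<alpha>) else 1 - \<beta>)"
  by (simp add: phi_def \<kappa>_def)

lemma phi_nonneg: "0 \<le> phi \<alpha> \<beta> s"
  using \<kappa>_pos \<beta>_less by (simp add: phi_eq)

lemma phi_le: "phi \<alpha> \<beta> s \<le> 1 - \<beta>"
proof -
  have "\<kappa> * (s - \<alpha>) \<le> \<kappa> * (1 - 2 * \<alpha>)" if "s < 1 - \<alpha>"
    using \<kappa>_pos that by (intro mult_left_mono) auto
  then show ?thesis
    using one_minus_\<beta>_div_\<kappa> \<kappa>_pos \<beta>_less by (auto simp: phi_eq field_simps)
qed

lemma phi_le_iff:
  assumes "0 \<le> x" "x < 1 - \<beta>"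
  shows "phi \<alpha> \<beta> s \<le> x \<longleftrightarrow> s \<le> \<alpha> + x / \<kappa>"
proof -
  have "x / \<kappa> < 1 - 2 * \<alpha>"
    using \<kappa>_pos one_minus_\<beta>_div_\<kappa> assms by (metis divide_strict_right_mono)
  moreover have "\<kappa> * (s - \<alpha>) \<le> x \<longleftrightarrow> s - \<alpha> \<le> x / \<kappa>"
    using \<kappa>_pos by (simp add: field_simps)
  moreover have "0 \<le> x / \<kappa>"
    using \<kappa>_pos assms by simp
  ultimately show ?thesis
    using assms by (auto simp: phi_eq)
qed

lemma le_phi_iff:
  assumes "0 < y" "y \<le> 1 - \<beta>"
  shows "y \<le> phi \<alpha> \<beta> s \<longleftrightarrow> \<alpha> + y / \<kappa> \<le> s"
proof -
  have "y / \<kappa> \<le> 1 - 2 * \<alpha>"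
    using \<kappa>_pos one_minus_\<beta>_div_\<kappa> assms by (metis divide_right_mono less_imp_le)
  moreover have "y \<le> \<kappa> * (s - \<alpha>) \<longleftrightarrow> y / \<kappa> \<le> s - \<alpha>"
    using \<kappa>_pos by (simp add: field_simps)
  moreover have "0 < y / \<kappa>"
    using \<kappa>_pos assms by simp
  ultimately show ?thesis
    using assms by (auto simp: phi_eq)
qed

lemma borel_measurable_phi [measurable]: "phi \<alpha> \<beta> \<in> borel_measurable borel"
  unfolding phi_def by measurable

definition fibre :: "real \<Rightarrow> real set" where
  "fibre t = {s \<in> {0..1}. phi \<alpha> \<beta> s \<le> t \<and> t \<le> phi \<alpha> \<beta> s + \<beta>}"

lemma fibre_in_borel: "fibre t \<in> sets borel"
  unfolding fibre_def by measurable

lemma mem_H_iff_fibre: "(u, t) \<in> H \<alpha> \<beta> \<longleftrightarrow> u \<in> fibre t"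
  using phi_nonneg[of u] phi_le[of u] by (auto simp: H_def fibre_def)

lemma fibre_eq:
  "fibre t = (if t < 0 then {} else if t \<le> \<beta> then {0..\<alpha> + t / \<kappa>}
     else if t < 1 - \<beta> then {\<alpha> + (t - \<beta>) / \<kappa> .. \<alpha> + t / \<kappa>}
     else if t \<le> 1 then {\<alpha> + (t - \<beta>) / \<kappa> .. 1} else {})"
proof -
  have upper: "\<alpha> + t / \<kappa> \<le> 1" if "t < 1 - \<beta>"
    using \<kappa>_pos one_minus_\<beta>_div_\<kappa> \<alpha>_nonneg that divide_right_mono[of t "1 - \<beta>" \<kappa>] by linarith
  have lower: "0 \<le> \<alpha> + (t - \<beta>) / \<kappa>" if "\<beta> < t"
    using \<kappa>_pos \<alpha>_nonneg that by simp
  consider "t < 0" | "0 \<le> t" "t \<le> \<beta>" | "\<beta> < t" "t < 1 - \<beta>" | "1 - \<beta> \<le> t" "t \<le> 1" | "1 < t"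
    by linarith
  then show ?thesis
  proof cases
    case 1
    have "\<not> phi \<alpha> \<beta> s \<le> t" for s
      using phi_nonneg[of s] 1 by linarith
    then have "fibre t = {}"
      by (auto simp: fibre_def)
    with 1 show ?thesis
      by simp
  next
    case 2
    then have "t < 1 - \<beta>" "\<And>s. t \<le> phi \<alpha> \<beta> s + \<beta>"
      using \<beta>_less phi_nonneg by (auto intro: add_increasing)
    with 2 show ?thesis
      using upper phi_le_iff by (auto simp: fibre_def)
  next
    case 3
    then have "0 < t - \<beta>" "t - \<beta> \<le> 1 - \<beta>" "\<not> t \<le> \<beta>" "\<not> t < 0" "t \<le> 1"
      using \<beta>_nonneg \<beta>_less by auto
    with 3 show ?thesis
      using upper lower phi_le_iff le_phi_iff[of "t - \<beta>"] by (auto simp: fibre_def algebra_simps)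
  next
    case 4
    then have "0 < t - \<beta>" "t - \<beta> \<le> 1 - \<beta>" "\<not> t \<le> \<beta>" "\<not> t < 1 - \<beta>" "\<And>s. phi \<alpha> \<beta> s \<le> t"
      using \<beta>_less phi_le by (auto intro: order.trans)
    with 4 show ?thesis
      using lower le_phi_iff[of "t - \<beta>"] by (auto simp: fibre_def algebra_simps)
  next
    case 5
    have "\<not> t \<le> phi \<alpha> \<beta> s + \<beta>" for s
      using phi_le[of s] 5 by linarith
    then have "fibre t = {}"
      by (auto simp: fibre_def)
    with 5 \<beta>_nonneg \<beta>_less show ?thesis
      by simp
  qed
qed

lemma L_eq_measure: "L \<alpha> \<beta> t = measure lborel (fibre t)"
proof -
  have "L \<alpha> \<beta> t = (LINT s:{0..1}|lborel. indicator {s. phi \<alpha> \<beta> s \<le> t \<and> t \<le> phi \<alpha> \<beta> s + \<beta>} s)"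
    unfolding L_def by (simp add: interval_integral_Icc zero_ereal_def one_ereal_def)
  also have "\<dots> = integral\<^sup>L lborel (indicator (fibre t))"
    unfolding set_lebesgue_integral_def by (intro Bochner_Integration.integral_cong) (auto simp: fibre_def indicator_def)
  finally show ?thesis
    by (simp add: fibre_def)
qed

lemma L_eq:
  "L \<alpha> \<beta> t = (if t < 0 then 0 else if t \<le> \<beta> then \<alpha> + t / \<kappa> else if t < 1 - \<beta> then \<beta> / \<kappa>
     else if t \<le> 1 then 1 - \<alpha> - (t - \<beta>) / \<kappa> else 0)"
proof -
  have "0 \<le> \<alpha> + t / \<kappa>" if "0 \<le> t"
    using \<kappa>_pos \<alpha>_nonneg that by simp
  moreover have "(t - \<beta>) / \<kappa> \<le> t / \<kappa>"
    using \<kappa>_pos \<beta>_nonneg by (intro divide_right_mono) auto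
  moreover have "\<alpha> + t / \<kappa> - (\<alpha> + (t - \<beta>) / \<kappa>) = \<beta> / \<kappa>"
    using \<kappa>_pos by (simp add: field_simps)
  moreover have "\<alpha> + (t - \<beta>) / \<kappa> \<le> 1" if "t \<le> 1"
    using \<kappa>_pos one_minus_\<beta>_div_\<kappa> \<alpha>_nonneg that divide_right_mono[of "t - \<beta>" "1 - \<beta>" \<kappa>] by linarith
  ultimately show ?thesis
    unfolding L_eq_measure fibre_eq by auto
qed

definition L_max :: real where "L_max = \<alpha> + \<beta> / \<kappa>"

lemma L_max_less_1: "L_max < 1"
proof -
  have "0 < (1 - 2 * \<beta>) * (1 - \<alpha>) + \<alpha> * \<beta>"
    using \<alpha>_nonneg \<alpha>_less \<beta>_nonneg \<beta>_less by (intro add_pos_nonneg mult_pos_pos) auto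
  then have "\<beta> * (1 - 2 * \<alpha>) < (1 - \<alpha>) * (1 - \<beta>)"
    by (simp add: algebra_simps)
  then have "\<beta> / \<kappa> < 1 - \<alpha>"
    using \<alpha>_less \<beta>_less by (simp add: \<kappa>_def divide_less_eq)
  then show ?thesis
    by (simp add: L_max_def)
qed

lemma L_le_L_max: "L \<alpha> \<beta> t \<le> L_max"
proof -
  have "t / \<kappa> \<le> \<beta> / \<kappa>" if "t \<le> \<beta>"
    using \<kappa>_pos that by (intro divide_right_mono) auto
  moreover have "(1 - \<beta>) / \<kappa> \<le> t / \<kappa>" if "1 - \<beta> \<le> t"
    using \<kappa>_pos that by (intro divide_right_mono) auto
  moreover have "t / \<kappa> = (t - \<beta>) / \<kappa> + \<beta> / \<kappa>"
    by (simp add: diff_divide_distrib)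
  ultimately show ?thesis
    using \<alpha>_nonneg \<alpha>_less \<beta>_nonneg \<kappa>_pos one_minus_\<beta>_div_\<kappa> by (auto simp: L_eq L_max_def)
qed

(* the area of H, all of whose vertical sections have length \<beta> *)
lemma L_has_integral: "(L \<alpha> \<beta> has_integral \<beta>) {0..1}"
proof -
  have i1: "(L \<alpha> \<beta> has_integral (\<alpha> * (\<beta> - 0) + (1 / \<kappa>) * (\<beta>\<^sup>2 - 0\<^sup>2) / 2)) {0..\<beta>}"
  proof (rule has_integral_spike_finite)
    show "((\<lambda>t. \<alpha> + 1 / \<kappa> * t) has_integral (\<alpha> * (\<beta> - 0) + (1 / \<kappa>) * (\<beta>\<^sup>2 - 0\<^sup>2) / 2)) {0..\<beta>}"
      by (rule has_integral_affine[OF \<beta>_nonneg])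
  qed (auto simp: L_eq)
  have i2: "(L \<alpha> \<beta> has_integral (\<beta> / \<kappa> * (1 - 2 * \<beta>))) {\<beta>..1 - \<beta>}"
  proof (rule has_integral_spike_finite[where S = "{\<beta>, 1 - \<beta>}"])
    show "((\<lambda>t. \<beta> / \<kappa>) has_integral (\<beta> / \<kappa> * (1 - 2 * \<beta>))) {\<beta>..1 - \<beta>}"
      using has_integral_const_real[of "\<beta> / \<kappa>" \<beta> "1 - \<beta>"] \<beta>_less by (simp add: algebra_simps)
  qed (use \<beta>_nonneg in \<open>auto simp: L_eq\<close>)
  have i3: "(L \<alpha> \<beta> has_integral ((1 - \<alpha> + \<beta> / \<kappa>) * (1 - (1 - \<beta>)) + (- 1 / \<kappa>) * (1\<^sup>2 - (1 - \<beta>)\<^sup>2) / 2)) {1 - \<beta>..1}"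
  proof (rule has_integral_spike_finite[where S = "{1 - \<beta>}"])
    show "((\<lambda>t. (1 - \<alpha> + \<beta> / \<kappa>) + (- 1 / \<kappa>) * t) has_integral
        ((1 - \<alpha> + \<beta> / \<kappa>) * (1 - (1 - \<beta>)) + (- 1 / \<kappa>) * (1\<^sup>2 - (1 - \<beta>)\<^sup>2) / 2)) {1 - \<beta>..1}"
      using \<beta>_nonneg by (intro has_integral_affine) simp
    show "L \<alpha> \<beta> t = (1 - \<alpha> + \<beta> / \<kappa>) + (- 1 / \<kappa>) * t" if "t \<in> {1 - \<beta>..1} - {1 - \<beta>}" for t
      using that \<beta>_less by (auto simp: L_eq diff_divide_distrib)
  qed simp
  have "(L \<alpha> \<beta> has_integral ((\<alpha> * (\<beta> - 0) + (1 / \<kappa>) * (\<beta>\<^sup>2 - 0\<^sup>2) / 2) + \<beta> / \<kappa> * (1 - 2 * \<beta>)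
      + ((1 - \<alpha> + \<beta> / \<kappa>) * (1 - (1 - \<beta>)) + (- 1 / \<kappa>) * (1\<^sup>2 - (1 - \<beta>)\<^sup>2) / 2))) {0..1}"
    using \<beta>_nonneg \<beta>_less
    by (intro has_integral_combine[OF _ _ has_integral_combine[OF _ _ i1 i2] i3]) auto
  moreover have "(\<alpha> * (\<beta> - 0) + (1 / \<kappa>) * (\<beta>\<^sup>2 - 0\<^sup>2) / 2) + \<beta> / \<kappa> * (1 - 2 * \<beta>)
      + ((1 - \<alpha> + \<beta> / \<kappa>) * (1 - (1 - \<beta>)) + (- 1 / \<kappa>) * (1\<^sup>2 - (1 - \<beta>)\<^sup>2) / 2) = \<beta>"
    using \<kappa>_pos by (simp add: field_simps power2_eq_square)
  ultimately show ?thesis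
    by simp
qed

lemma isCont_L:
  assumes "t \<in> {0<..<1} - {\<beta>, 1 - \<beta>}"
  shows "isCont (L \<alpha> \<beta>) t"
proof -
  consider "t \<in> {0<..<\<beta>}" | "t \<in> {\<beta><..<1 - \<beta>}" | "t \<in> {1 - \<beta><..<1}"
    using assms by force
  then show ?thesis
  proof cases
    case 1
    have "continuous_on {0<..<\<beta>} (\<lambda>t. \<alpha> + t / \<kappa>)"
      using \<kappa>_pos by (intro continuous_intros) auto
    then have "continuous_on {0<..<\<beta>} (L \<alpha> \<beta>)"
      by (rule continuous_on_eq) (simp add: L_eq)
    with 1 show ?thesis
      by (simp add: continuous_on_eq_continuous_at)
  next
    case 2
    have "continuous_on {\<beta><..<1 - \<beta>} (\<lambda>t. \<beta> / \<kappa>)"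
      by (intro continuous_intros)
    then have "continuous_on {\<beta><..<1 - \<beta>} (L \<alpha> \<beta>)"
      by (rule continuous_on_eq) (use \<beta>_nonneg in \<open>simp add: L_eq\<close>)
    with 2 show ?thesis
      by (simp add: continuous_on_eq_continuous_at)
  next
    case 3
    have "continuous_on {1 - \<beta><..<1} (\<lambda>t. 1 - \<alpha> - (t - \<beta>) / \<kappa>)"
      using \<kappa>_pos by (intro continuous_intros) auto
    then have "continuous_on {1 - \<beta><..<1} (L \<alpha> \<beta>)"
      by (rule continuous_on_eq) (use \<beta>_less in \<open>simp add: L_eq\<close>)
    with 3 show ?thesis
      by (simp add: continuous_on_eq_continuous_at)
  qed
qed

lemma fT_eq: "(1 - \<beta>) * fT \<alpha> \<beta> t = 1 - L \<alpha> \<beta> t"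
  using \<beta>_less by (simp add: fT_def)

lemma fT_lower_bound: "(1 - L_max) / (1 - \<beta>) \<le> fT \<alpha> \<beta> t"
  using L_le_L_max[of t] \<beta>_less by (simp add: fT_def divide_right_mono)

lemma fT_pos: "0 < fT \<alpha> \<beta> t"
proof -
  have "0 < (1 - L_max) / (1 - \<beta>)"
    using L_max_less_1 \<beta>_less by simp
  then show ?thesis
    using fT_lower_bound by (rule order.strict_trans2)
qed

lemma borel_measurable_fT [measurable]: "fT \<alpha> \<beta> \<in> borel_measurable borel"
  unfolding fT_def[abs_def] L_eq by measurable

lemma fT_has_integral: "(fT \<alpha> \<beta> has_integral 1) {0..1}"
proof -
  have "((\<lambda>t. (1 - L \<alpha> \<beta> t) / (1 - \<beta>)) has_integral ((1 - \<beta>) / (1 - \<beta>))) {0..1}"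
    using has_integral_diff[OF has_integral_const_real[of 1 0 1] L_has_integral]
    by (intro has_integral_divide) simp
  then show ?thesis
    using \<beta>_less by (simp add: fT_def[abs_def])
qed

lemma isCont_fT: "t \<in> {0<..<1} - {\<beta>, 1 - \<beta>} \<Longrightarrow> isCont (fT \<alpha> \<beta>) t"
  unfolding fT_def[abs_def] using isCont_L \<beta>_less by (intro continuous_intros) auto

lemma FT_eq_integral:
  assumes "v \<in> {0..1}"
  shows "FT \<alpha> \<beta> v = integral {0..v} (fT \<alpha> \<beta>)"
proof -
  have "(fT \<alpha> \<beta> has_integral integral {0..v} (fT \<alpha> \<beta>)) {0..v}"
    using assms integrable_on_subinterval[OF has_integral_integrable[OF fT_has_integral]] by auto
  then have "(LINT x:{0..v}|lborel. fT \<alpha> \<beta> x) = integral {0..v} (fT \<alpha> \<beta>)"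
    using fT_pos less_imp_le by (intro set_borel_integral_if_has_integral_nonneg(2)) auto
  then show ?thesis
    using assms by (simp add: FT_def interval_integral_Icc zero_ereal_def)
qed

lemma FT_0: "FT \<alpha> \<beta> 0 = 0"
  by (simp add: FT_eq_integral)

lemma FT_1: "FT \<alpha> \<beta> 1 = 1"
  using fT_has_integral by (simp add: FT_eq_integral integral_unique)

lemma continuous_on_FT: "continuous_on {0..1} (FT \<alpha> \<beta>)"
  using indefinite_integral_continuous_1[OF has_integral_integrable[OF fT_has_integral]]
  by (rule continuous_on_eq) (simp add: FT_eq_integral)

lemma FT_increment:
  assumes "0 \<le> x" "x \<le> y" "y \<le> 1"
  shows "(1 - L_max) / (1 - \<beta>) * (y - x) \<le> FT \<alpha> \<beta> y - FT \<alpha> \<beta> x"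
proof -
  have int: "fT \<alpha> \<beta> integrable_on {a..b}" if "{a..b} \<subseteq> {0..1}" for a b
    using that integrable_on_subinterval[OF has_integral_integrable[OF fT_has_integral]] by blast
  have "integral {0..x} (fT \<alpha> \<beta>) + integral {x..y} (fT \<alpha> \<beta>) = integral {0..y} (fT \<alpha> \<beta>)"
    using assms int by (intro Henstock_Kurzweil_Integration.integral_combine) auto
  moreover have "integral {x..y} (\<lambda>_. (1 - L_max) / (1 - \<beta>)) \<le> integral {x..y} (fT \<alpha> \<beta>)"
    using assms int fT_lower_bound by (intro integral_le) auto
  ultimately show ?thesis
    using assms by (simp add: FT_eq_integral mult.commute)
qed

lemma strict_mono_on_FT: "strict_mono_on {0..1} (FT \<alpha> \<beta>)"
proof (rule strict_mono_onI)
  fix x y :: real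
  assume xy: "x \<in> {0..1}" "y \<in> {0..1}" "x < y"
  have "0 < (1 - L_max) / (1 - \<beta>) * (y - x)"
    using L_max_less_1 \<beta>_less xy by simp
  also have "\<dots> \<le> FT \<alpha> \<beta> y - FT \<alpha> \<beta> x"
    using xy by (intro FT_increment) auto
  finally show "FT \<alpha> \<beta> x < FT \<alpha> \<beta> y"
    by simp
qed

lemma FT_has_real_derivative:
  assumes t: "t \<in> {0<..<1} - {\<beta>, 1 - \<beta>}"
  shows "(FT \<alpha> \<beta> has_real_derivative fT \<alpha> \<beta> t) (at t)"
proof -
  have "((\<lambda>u. integral {0..u} (fT \<alpha> \<beta>)) has_vector_derivative fT \<alpha> \<beta> t) (at t within ({0..1} - {\<beta>, 1 - \<beta>}))"
    by (rule integral_has_vector_derivative_continuous_at)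
      (use t has_integral_integrable[OF fT_has_integral] isCont_fT[OF t]
        in \<open>auto intro: continuous_at_imp_continuous_within\<close>)
  moreover have "at t within ({0..1} - {\<beta>, 1 - \<beta>}) = at t"
  proof (rule at_within_interior)
    have "open ({0<..<1} - {\<beta>, 1 - \<beta>})"
      by (intro open_Diff) auto
    moreover have "{0<..<1} - {\<beta>, 1 - \<beta>} \<subseteq> {0..1} - {\<beta>, 1 - \<beta>}"
      by auto
    ultimately show "t \<in> interior ({0..1} - {\<beta>, 1 - \<beta>})"
      using t interior_maximal by blast
  qed
  ultimately have "((\<lambda>u. integral {0..u} (fT \<alpha> \<beta>)) has_real_derivative fT \<alpha> \<beta> t) (at t)"
    by (simp add: has_real_derivative_iff_has_vector_derivative)
  then show ?thesis
    by (rule has_field_derivative_transform_within_open[where S = "{0<..<1}"])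
      (use t in \<open>auto simp: FT_eq_integral\<close>)
qed

lemma FT_inv_FT: "x \<in> {0..1} \<Longrightarrow> FT_inv \<alpha> \<beta> (FT \<alpha> \<beta> x) = x"
  unfolding FT_inv_def by (rule Inf_superlevel_set_strict_mono_on[OF strict_mono_on_FT])

lemma FT_image: "FT \<alpha> \<beta> ` {0..1} = {0..1}"
proof
  show "FT \<alpha> \<beta> ` {0..1} \<subseteq> {0..1}"
  proof clarify
    fix x :: real
    assume "x \<in> {0..1}"
    then have "FT \<alpha> \<beta> 0 \<le> FT \<alpha> \<beta> x" "FT \<alpha> \<beta> x \<le> FT \<alpha> \<beta> 1"
      using strict_mono_on_leD[OF strict_mono_on_FT] by auto
    then show "FT \<alpha> \<beta> x \<in> {0..1}"
      by (simp add: FT_0 FT_1)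
  qed
  show "{0..1} \<subseteq> FT \<alpha> \<beta> ` {0..1}"
    using IVT'[of "FT \<alpha> \<beta>" 0 _ 1] continuous_on_FT FT_0 FT_1 by fastforce
qed

lemma FT_inv_mem: "v \<in> {0..1} \<Longrightarrow> FT_inv \<alpha> \<beta> v \<in> {0..1}"
  and FT_FT_inv: "v \<in> {0..1} \<Longrightarrow> FT \<alpha> \<beta> (FT_inv \<alpha> \<beta> v) = v"
  using FT_image FT_inv_FT by (metis imageE)+

lemma continuous_on_FT_inv: "continuous_on {0..1} (FT_inv \<alpha> \<beta>)"
  using continuous_on_inv[OF continuous_on_FT compact_Icc, of "FT_inv \<alpha> \<beta>"] FT_inv_FT FT_image by simp

lemma FT_inv_le_iff:
  assumes "v \<in> {0..1}" "w \<in> {0..1}"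
  shows "FT_inv \<alpha> \<beta> v \<le> FT_inv \<alpha> \<beta> w \<longleftrightarrow> v \<le> w"
  using strict_mono_on_less_eq[OF strict_mono_on_FT FT_inv_mem[OF assms(1)] FT_inv_mem[OF assms(2)]] assms
  by (simp add: FT_FT_inv)

lemma FT_inv_has_real_derivative:
  assumes v: "v \<in> {0<..<1} - {FT \<alpha> \<beta> \<beta>, FT \<alpha> \<beta> (1 - \<beta>)}"
  shows "(FT_inv \<alpha> \<beta> has_real_derivative inverse (fT \<alpha> \<beta> (FT_inv \<alpha> \<beta> v))) (at v)"
proof (rule DERIV_inverse_function[where a = 0 and b = 1])
  have "FT_inv \<alpha> \<beta> v \<in> {0<..<1} - {\<beta>, 1 - \<beta>}"
    using v FT_inv_mem[of v] FT_FT_inv[of v] FT_0 FT_1 by (auto simp: less_le)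
  then show "(FT \<alpha> \<beta> has_real_derivative fT \<alpha> \<beta> (FT_inv \<alpha> \<beta> v)) (at (FT_inv \<alpha> \<beta> v))"
    by (rule FT_has_real_derivative)
  show "fT \<alpha> \<beta> (FT_inv \<alpha> \<beta> v) \<noteq> 0"
    using fT_pos by (metis less_irrefl)
  show "isCont (FT_inv \<alpha> \<beta>) v"
    using continuous_on_interior[OF continuous_on_FT_inv, of v] v by auto
  show "0 < v" "v < 1"
    using v by auto
  show "FT \<alpha> \<beta> (FT_inv \<alpha> \<beta> y) = y" if "0 < y" "y < 1" for y
    using that by (intro FT_FT_inv) auto
qed

lemma inverse_fT_FT_inv_has_integral:
  assumes "0 \<le> x" "x \<le> y" "y \<le> 1"
  shows "((\<lambda>v. inverse (fT \<alpha> \<beta> (FT_inv \<alpha> \<beta> v))) has_integral (FT_inv \<alpha> \<beta> y - FT_inv \<alpha> \<beta> x)) {x..y}"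
proof (rule fundamental_theorem_of_calculus_interior_strong[of "{FT \<alpha> \<beta> \<beta>, FT \<alpha> \<beta> (1 - \<beta>)}"])
  show "continuous_on {x..y} (FT_inv \<alpha> \<beta>)"
    using continuous_on_FT_inv by (rule continuous_on_subset) (use assms in auto)
  show "(FT_inv \<alpha> \<beta> has_vector_derivative inverse (fT \<alpha> \<beta> (FT_inv \<alpha> \<beta> z))) (at z)"
    if "z \<in> {x<..<y} - {FT \<alpha> \<beta> \<beta>, FT \<alpha> \<beta> (1 - \<beta>)}" for z
  proof -
    have "z \<in> {0<..<1} - {FT \<alpha> \<beta> \<beta>, FT \<alpha> \<beta> (1 - \<beta>)}"
      using that assms by auto
    then show ?thesis
      using FT_inv_has_real_derivative has_real_derivative_iff_has_vector_derivative by blast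
  qed
qed (use assms in auto)

lemma cdens_eq:
  "cdens \<alpha> \<beta> u v = (if u \<in> fibre (FT_inv \<alpha> \<beta> v) then 0 else 1 / (1 - L \<alpha> \<beta> (FT_inv \<alpha> \<beta> v)))"
  by (simp add: cdens_def mem_H_iff_fibre fT_eq)

lemma cdens_nonneg: "0 \<le> cdens \<alpha> \<beta> u v"
  using L_le_L_max[of "FT_inv \<alpha> \<beta> v"] L_max_less_1 by (simp add: cdens_eq)

lemma cdens_le: "cdens \<alpha> \<beta> u v \<le> 1 / (1 - L_max)"
  using L_le_L_max L_max_less_1 by (simp add: cdens_eq frac_le)

lemma borel_measurable_cdens:
  "(\<lambda>p. indicator ({0..1} \<times> {0..1}) p * cdens \<alpha> \<beta> (fst p) (snd p)) \<in> borel_measurable borel"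
proof -
  \<comment> \<open>FT_inv is junk outside [0,1]; clamping its argument makes it continuous on the whole line\<close>
  define F where "F v = FT_inv \<alpha> \<beta> (max 0 (min 1 v))" for v
  have "continuous_on UNIV F"
    unfolding F_def by (rule continuous_on_compose2[OF continuous_on_FT_inv]) (auto intro!: continuous_intros)
  then have [measurable]: "F \<in> borel_measurable borel"
    by (rule borel_measurable_continuous_onI)
  have "H \<alpha> \<beta> = {p \<in> space (borel \<Otimes>\<^sub>M borel). fst p \<in> {0..1} \<and> snd p \<in> {0..1} \<and>
      phi \<alpha> \<beta> (fst p) \<le> snd p \<and> snd p \<le> phi \<alpha> \<beta> (fst p) + \<beta>}"
    by (auto simp: H_def space_pair_measure)
  also have "\<dots> \<in> sets (borel \<Otimes>\<^sub>M borel)"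
    by measurable
  finally have [measurable]: "H \<alpha> \<beta> \<in> sets (borel \<Otimes>\<^sub>M borel)" .
  have "(\<lambda>p. indicator {0..1} (fst p) * indicator {0..1} (snd p) *
      (if (fst p, F (snd p)) \<in> H \<alpha> \<beta> then 0 else 1 / ((1 - \<beta>) * fT \<alpha> \<beta> (F (snd p)))))
    \<in> borel_measurable (borel \<Otimes>\<^sub>M borel)"
    by measurable
  moreover have "(\<lambda>p. indicator ({0..1} \<times> {0..1}) p * cdens \<alpha> \<beta> (fst p) (snd p))
    = (\<lambda>p. indicator {0..1} (fst p) * indicator {0..1} (snd p) *
      (if (fst p, F (snd p)) \<in> H \<alpha> \<beta> then 0 else 1 / ((1 - \<beta>) * fT \<alpha> \<beta> (F (snd p)))))"
    by (auto simp: fun_eq_iff indicator_def cdens_def F_def mem_Times_iff)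
  ultimately show ?thesis
    by (simp add: borel_prod)
qed

lemma set_integrable_cdens: "set_integrable lborel ({0..1} \<times> {0..1}) (\<lambda>p. cdens \<alpha> \<beta> (fst p) (snd p))"
  unfolding set_integrable_def
proof (rule integrableI_bounded_set[where A = "{0..1} \<times> {0..1}" and B = "1 / (1 - L_max)"])
  have "emeasure (lborel \<Otimes>\<^sub>M lborel) ({0..1::real} \<times> {0..1::real}) = 1"
    by (subst lborel.emeasure_pair_measure_Times) auto
  then show "emeasure lborel ({0..1::real} \<times> {0..1::real}) < \<infinity>"
    by (simp add: lborel_prod)
qed (use borel_measurable_cdens cdens_nonneg cdens_le in \<open>auto intro!: borel_closed closed_Times simp: indicator_def\<close>)

lemma cdens_integral_over_u:
  "set_integrable lborel {0..1} (\<lambda>u. cdens \<alpha> \<beta> u v) \<and> (LINT u:{0..1}|lborel. cdens \<alpha> \<beta> u v) = 1"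
proof -
  define t where "t = FT_inv \<alpha> \<beta> v"
  define h where "h = 1 / (1 - L \<alpha> \<beta> t)"
  have "emeasure lborel (fibre t) \<le> emeasure lborel {0..1::real}"
    by (rule emeasure_mono) (auto simp: fibre_def)
  then have fibre_fin: "emeasure lborel (fibre t) < \<infinity>"
    by (simp add: emeasure_lborel_Icc_eq le_less_trans)
  have eq: "(\<lambda>u. indicator {0..1} u * cdens \<alpha> \<beta> u v) = (\<lambda>u. h * indicator {0..1} u - h * indicator (fibre t) u)"
    by (auto simp: fun_eq_iff indicator_def cdens_eq h_def t_def fibre_def)
  have "integrable lborel (\<lambda>u. h * indicator {0..1} u - h * indicator (fibre t) u)"
    using fibre_fin fibre_in_borel
    by (intro Bochner_Integration.integrable_diff integrable_mult_right integrable_real_indicator) auto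
  moreover have "integral\<^sup>L lborel (\<lambda>u. h * indicator {0..1} u - h * indicator (fibre t) u) = h * (1 - L \<alpha> \<beta> t)"
    using fibre_fin by (subst Bochner_Integration.integral_diff)
      (auto intro!: integrable_mult_right integrable_real_indicator simp: fibre_in_borel L_eq_measure algebra_simps)
  moreover have "h * (1 - L \<alpha> \<beta> t) = 1"
    using L_le_L_max[of t] L_max_less_1 by (simp add: h_def)
  ultimately show ?thesis
    using eq unfolding set_integrable_def set_lebesgue_integral_def by simp
qed

lemma cdens_has_integral_over_v:
  assumes u: "u \<in> {0..1}"
  shows "((\<lambda>v. cdens \<alpha> \<beta> u v) has_integral 1) {0..1}"
proof -
  define P where "P = phi \<alpha> \<beta> u"
  define Q where "Q = P + \<beta>"
  have PQ: "P \<in> {0..1}" "Q \<in> {0..1}" "P \<le> Q"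
    using phi_nonneg[of u] phi_le[of u] \<beta>_nonneg by (auto simp: P_def Q_def)
  define p where "p = FT \<alpha> \<beta> P"
  define q where "q = FT \<alpha> \<beta> Q"
  have pq: "p \<in> {0..1}" "q \<in> {0..1}" "p \<le> q"
    using PQ FT_image strict_mono_on_leD[OF strict_mono_on_FT] by (auto simp: p_def q_def)
  have FT_inv_pq: "FT_inv \<alpha> \<beta> p = P" "FT_inv \<alpha> \<beta> q = Q"
    using PQ by (simp_all add: p_def q_def FT_inv_FT)
  \<comment> \<open>c(u, v) is r v = FT_inv' v / (1 - \<beta>), except on [p, q], where (u, FT_inv v) lies in H\<close>
  define r where "r v = inverse (fT \<alpha> \<beta> (FT_inv \<alpha> \<beta> v)) / (1 - \<beta>)" for v
  have "(r has_integral (FT_inv \<alpha> \<beta> 1 - FT_inv \<alpha> \<beta> 0) / (1 - \<beta>)) {0..1}"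
    unfolding r_def by (intro has_integral_divide inverse_fT_FT_inv_has_integral) auto
  moreover have "FT_inv \<alpha> \<beta> 0 = 0" "FT_inv \<alpha> \<beta> 1 = 1"
    using FT_inv_FT[of 0] FT_inv_FT[of 1] by (simp_all add: FT_0 FT_1)
  ultimately have int_r: "(r has_integral 1 / (1 - \<beta>)) {0..1}"
    by simp
  have "(r has_integral (FT_inv \<alpha> \<beta> q - FT_inv \<alpha> \<beta> p) / (1 - \<beta>)) {p..q}"
    unfolding r_def using pq by (intro has_integral_divide inverse_fT_FT_inv_has_integral) auto
  then have "(r has_integral \<beta> / (1 - \<beta>)) {p..q}"
    by (simp add: FT_inv_pq Q_def)
  then have int_band: "((\<lambda>v. if v \<in> {p..q} then r v else 0) has_integral \<beta> / (1 - \<beta>)) {0..1}"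
    using pq by (subst has_integral_restrict) auto
  have "((\<lambda>v. r v - (if v \<in> {p..q} then r v else 0)) has_integral 1) {0..1}"
    using has_integral_diff[OF int_r int_band] \<beta>_less by (simp add: diff_divide_distrib[symmetric])
  then show ?thesis
  proof (rule has_integral_eq[rotated])
    fix v :: real
    assume v: "v \<in> {0..1}"
    have "(u, FT_inv \<alpha> \<beta> v) \<in> H \<alpha> \<beta> \<longleftrightarrow> P \<le> FT_inv \<alpha> \<beta> v \<and> FT_inv \<alpha> \<beta> v \<le> Q"
      using u FT_inv_mem[OF v] by (auto simp: H_def P_def Q_def)
    also have "\<dots> \<longleftrightarrow> v \<in> {p..q}"
      using FT_inv_le_iff[OF pq(1) v] FT_inv_le_iff[OF v pq(2)] by (simp add: FT_inv_pq)
    finally show "r v - (if v \<in> {p..q} then r v else 0) = cdens \<alpha> \<beta> u v"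
      by (simp add: cdens_def r_def divide_inverse mult.commute)
  qed
qed

lemma cdens_integral_over_v:
  assumes u: "u \<in> {0..1}"
  shows "set_integrable lborel {0..1} (\<lambda>v. cdens \<alpha> \<beta> u v) \<and> (LINT v:{0..1}|lborel. cdens \<alpha> \<beta> u v) = 1"
proof -
  have "(\<lambda>v. indicator ({0..1} \<times> {0..1}) (u, v) * cdens \<alpha> \<beta> (fst (u, v)) (snd (u, v))) \<in> borel_measurable borel"
    using measurable_compose[OF _ borel_measurable_cdens, of "\<lambda>v. (u, v)"]
    by (simp add: borel_measurable_continuous_onI continuous_on_Pair continuous_on_const continuous_on_id)
  then have "(\<lambda>v. indicator {0..1} v * cdens \<alpha> \<beta> u v) \<in> borel_measurable borel"
    using u by (simp add: indicator_times)
  then show ?thesis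
    using set_borel_integral_if_has_integral_nonneg[OF cdens_has_integral_over_v[OF u]] cdens_nonneg
    by blast
qed

end

theorem mainTheorem9:
  fixes \<alpha> \<beta> :: real
  assumes "0 \<le> \<alpha>" "\<alpha> < 1/2" "0 \<le> \<beta>" "\<beta> < 1/2"
  shows "(AE p in lborel. p \<in> {0..1} \<times> {0..1} \<longrightarrow> 0 \<le> cdens \<alpha> \<beta> (fst p) (snd p))
    \<and> (AE u in lborel. u \<in> {0..1} \<longrightarrow>
          set_integrable lborel {0..1} (\<lambda>v. cdens \<alpha> \<beta> u v) \<and>
          (LINT v:{0..1}|lborel. cdens \<alpha> \<beta> u v) = 1)
    \<and> (AE v in lborel. v \<in> {0..1} \<longrightarrow>
          set_integrable lborel {0..1} (\<lambda>u. cdens \<alpha> \<beta> u v) \<and>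
          (LINT u:{0..1}|lborel. cdens \<alpha> \<beta> u v) = 1)
    \<and> is_copula (\<lambda>u v. LINT p:{0..u} \<times> {0..v}|lborel. cdens \<alpha> \<beta> (fst p) (snd p))"
proof -
  interpret band_copula \<alpha> \<beta>
    using assms by unfold_locales
  have nonneg: "AE p in lborel. p \<in> {0..1} \<times> {0..1} \<longrightarrow> 0 \<le> cdens \<alpha> \<beta> (fst p) (snd p)"
    using cdens_nonneg by simp
  have integral_over_v: "AE u in lborel. u \<in> {0..1} \<longrightarrow>
      set_integrable lborel {0..1} (\<lambda>v. cdens \<alpha> \<beta> u v) \<and> (LINT v:{0..1}|lborel. cdens \<alpha> \<beta> u v) = 1"
    using cdens_integral_over_v by simp
  have integral_over_u: "AE v in lborel. v \<in> {0..1} \<longrightarrow>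
      set_integrable lborel {0..1} (\<lambda>u. cdens \<alpha> \<beta> u v) \<and> (LINT u:{0..1}|lborel. cdens \<alpha> \<beta> u v) = 1"
    using cdens_integral_over_u by simp
  have "is_copula (\<lambda>u v. LINT p:{0..u} \<times> {0..v}|lborel. cdens \<alpha> \<beta> (fst p) (snd p))"
    using cdens_integral_over_u cdens_integral_over_v
    by (intro is_copula_set_integral_density set_integrable_cdens nonneg) simp_all
  with nonneg integral_over_v integral_over_u show ?thesis
    by blast
qed

end
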